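(* Let $n\ge 2$, let $\psi\in\mathrm{Aut}(F_n)$, let $\Gamma=F_n/K$ be a finite characteristic quotient of $F_n$, and let $(X,x_1)\to(R_n,* )$ be the associated finite based cover, so that $\pi_1(X,x_1)\cong K$. If the automorphism of $\Gamma$ induced by $\psi$ is not the identity, then the automorphism of $H_1(X,\mathbb{Z})$ induced by $\psi$ is not the identity.
   Context: $F_n$ is the free group of rank $n\ge2$ with a fixed free basis $x_1,\dots,x_n$, identified with $\pi_1(R_n,* )$, where $R_n$ is the wedge of $n$ circles with wedge point $*$. A subgroup $K\le F_n$ is characteristic if $\psi(K)=K$ for all $\psi\in\mathrm{Aut}(F_n)$; then $\Gamma=F_n/K$ is a characteristic quotient and every $\psi\in\mathrm{Aut}(F_n)$ induces an automorphism of $\Gamma$. The based cover associated to a finite-index subgroup $K$ is the connected covering $p:(X,x_1)\to(R_n,* )$ with $p_*\pi_1(X,x_1)=K$; its deck group is $\Gamma$. The action of $\psi$ on $H_1(X,\mathbb{Z})$ is the automorphism of $K^{ab}\cong H_1(X,\mathbb{Z})$ induced by the restriction $\psi|_K:K\to K$ (equivalently, induced by the basepoint-preserving lift to $X$ of a based homotopy equivalence of $R_n$ realizing $\psi$). *)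

theory Defs
  imports "HOL-Algebra.Algebra"
begin

text \<open>The free group F_n on the basis x_0,...,x_(n-1) (letter (i,True) = x_i,
  letter (i,False) = x_i inverse), realised as the group of reduced words.\<close>

type_synonym letter = "nat \<times> bool"

definition letters :: "nat \<Rightarrow> letter set" where
  "letters n = {..<n} \<times> (UNIV :: bool set)"

definition canceling :: "letter \<Rightarrow> letter \<Rightarrow> bool" where
  "canceling a b \<longleftrightarrow> fst a = fst b \<and> snd a \<noteq> snd b"

fun reduced :: "letter list \<Rightarrow> bool" where
  "reduced [] = True"
| "reduced [a] = True"
| "reduced (a # b # ws) = (\<not> canceling a b \<and> reduced (b # ws))"

fun cons_red :: "letter \<Rightarrow> letter list \<Rightarrow> letter list" where
  "cons_red a [] = [a]"
| "cons_red a (b # ws) = (if canceling a b then ws else a # b # ws)"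

definition free_group :: "nat \<Rightarrow> letter list monoid" where
  "free_group n = \<lparr> carrier = {w. set w \<subseteq> letters n \<and> reduced w},
                     monoid.mult = (\<lambda>u v. foldr cons_red u v),
                     one = [] \<rparr>"

definition characteristic :: "('a, 'b) monoid_scheme \<Rightarrow> 'a set \<Rightarrow> bool" where
  "characteristic G K \<longleftrightarrow> subgroup K G \<and> (\<forall>\<phi> \<in> iso G G. \<phi> ` K = K)"

text \<open>The abelianisation K^ab = K/[K,K] of a subgroup K of G
  (this is H_1 of the based cover associated to K).\<close>

definition abelianization :: "('a, 'b) monoid_scheme \<Rightarrow> 'a set \<Rightarrow> 'a set monoid" where
  "abelianization G K = (G\<lparr>carrier := K\<rparr>) Mod (derived G K)"

text \<open>The map induced by psi on a quotient: a coset C is sent to psi ` C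
  (which is the coset of psi(g) when C is the coset of g and psi preserves
  the subgroup being divided out).\<close>

definition induced_on_cosets :: "('a \<Rightarrow> 'a) \<Rightarrow> 'a set \<Rightarrow> 'a set" where
  "induced_on_cosets \<psi> C = \<psi> ` C"

end

theory Submission
  imports Defs
begin

text \<open>The edges of the Schreier graph of \<open>\<Gamma> = F\<^sub>n/K\<close> form the 1-skeleton of the
  cover \<open>X\<close>, and counting with sign how often a loop at \<open>K\<close> traverses each edge is a
  homomorphism \<open>K \<rightarrow> \<int>\<^sup>E\<close> that kills \<open>[K,K]\<close>, i.e. it factors through \<open>H\<^sub>1(X)\<close>.
  If \<open>\<psi>\<close> acts trivially on \<open>H\<^sub>1(X)\<close> but moves the coset \<open>Kg\<close>, then conjugating by
  \<open>g\<close> and by \<open>\<psi> g\<close> shows that these edge counts are invariant under the nontrivial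
  deck transformation \<open>u = \<psi>(g) g\<inverse>\<close>. Fix a spanning tree; every edge \<open>e\<close> outside
  it lies on a loop that traverses no other non-tree edge, so invariance forces \<open>u e\<close>
  to be a tree edge. Thus \<open>u\<close> maps the \<open>|\<Gamma>|(n-1)+1\<close> non-tree edges injectively
  into the \<open>|\<Gamma>|-1\<close> tree edges, which is impossible for \<open>n \<ge> 2\<close>.\<close>

lemma reduced_Cons_tl: "reduced (a # w) \<Longrightarrow> reduced w"
  by (cases w) auto

lemma reduced_cons_red: "reduced w \<Longrightarrow> reduced (cons_red a w)"
  by (cases w) (auto intro: reduced_Cons_tl)

lemma reduced_foldr_cons_red: "reduced v \<Longrightarrow> reduced (foldr cons_red u v)"
  by (induction u) (auto intro: reduced_cons_red)

lemma set_cons_red: "set (cons_red a w) \<subseteq> insert a (set w)"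
  by (cases w) auto

lemma set_foldr_cons_red: "set (foldr cons_red u v) \<subseteq> set u \<union> set v"
  by (induction u) (use set_cons_red in fastforce)+

lemma canceling_canceling_eq: "canceling a b \<Longrightarrow> canceling b c \<Longrightarrow> a = c"
  by (cases a; cases b; cases c) (auto simp: canceling_def)

lemma cons_red_cancel:
  assumes "canceling a b" "reduced x"
  shows "cons_red a (cons_red b x) = x"
proof (cases x)
  case (Cons c x')
  show ?thesis
  proof (cases "canceling b c")
    case True
    then have "a = c" using assms canceling_canceling_eq by blast
    then show ?thesis using Cons True assms(2) by (cases x') auto
  qed (use Cons assms in simp)
qed (use assms in simp)

lemma foldr_cons_red_cons_red:
  assumes "reduced w"
  shows "foldr cons_red (cons_red a v) w = cons_red a (foldr cons_red v w)"
proof (cases v)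
  case (Cons b v')
  then show ?thesis
    using cons_red_cancel[OF _ reduced_foldr_cons_red[OF assms]] by auto
qed simp

lemma foldr_cons_red_assoc:
  "reduced w \<Longrightarrow> foldr cons_red (foldr cons_red u v) w = foldr cons_red u (foldr cons_red v w)"
  by (induction u) (simp_all add: foldr_cons_red_cons_red)

definition inverse_letter :: "letter \<Rightarrow> letter" where
  "inverse_letter l = (fst l, \<not> snd l)"

definition inverse_word :: "letter list \<Rightarrow> letter list" where
  "inverse_word w = rev (map inverse_letter w)"

lemma foldr_cons_red_inverse_word:
  "reduced (u @ v) \<Longrightarrow> foldr cons_red (inverse_word u) (u @ v) = v"
proof (induction u)
  case (Cons a u)
  have "cons_red (inverse_letter a) (a # u @ v) = u @ v"
    by (simp add: canceling_def inverse_letter_def)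
  then show ?case using Cons reduced_Cons_tl by (fastforce simp: inverse_word_def)
qed (simp add: inverse_word_def)

lemma reduced_snoc:
  "reduced (w @ [a]) \<longleftrightarrow> reduced w \<and> (w = [] \<or> \<not> canceling (last w) a)"
  by (induction w rule: reduced.induct) auto

lemma reduced_inverse_word: "reduced w \<Longrightarrow> reduced (inverse_word w)"
proof (induction w rule: reduced.induct)
  case (3 a b ws)
  then have "reduced (inverse_word (b # ws))" "\<not> canceling (inverse_letter b) (inverse_letter a)"
    by (auto simp: canceling_def inverse_letter_def)
  moreover have "inverse_word (a # b # ws) = inverse_word (b # ws) @ [inverse_letter a]"
    "last (inverse_word (b # ws)) = inverse_letter b"
    by (simp_all add: inverse_word_def)
  ultimately show ?case by (simp only: reduced_snoc) simp
qed (simp_all add: inverse_word_def)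

lemma group_free_group: "group (free_group n)"
proof (rule groupI)
  fix x y assume "x \<in> carrier (free_group n)" "y \<in> carrier (free_group n)"
  then show "x \<otimes>\<^bsub>free_group n\<^esub> y \<in> carrier (free_group n)"
    using set_foldr_cons_red[of x y] reduced_foldr_cons_red[of y x] by (auto simp: free_group_def)
next
  fix x assume x: "x \<in> carrier (free_group n)"
  show "\<exists>y\<in>carrier (free_group n). y \<otimes>\<^bsub>free_group n\<^esub> x = \<one>\<^bsub>free_group n\<^esub>"
  proof
    show "inverse_word x \<otimes>\<^bsub>free_group n\<^esub> x = \<one>\<^bsub>free_group n\<^esub>"
      using foldr_cons_red_inverse_word[of x "[]"] x by (simp add: free_group_def)
    show "inverse_word x \<in> carrier (free_group n)"
      using x reduced_inverse_word
      by (auto simp: free_group_def inverse_word_def inverse_letter_def letters_def)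
  qed
qed (auto simp: free_group_def foldr_cons_red_assoc)

locale free_group_rank =
  fixes n :: nat
begin

abbreviation G where "G \<equiv> free_group n"
abbreviation fg_mult (infixl "\<cdot>" 70) where "x \<cdot> y \<equiv> x \<otimes>\<^bsub>G\<^esub> y"
abbreviation fg_r_coset (infixl "\<triangleright>" 60) where "c \<triangleright> x \<equiv> c #>\<^bsub>G\<^esub> x"
abbreviation fg_l_coset (infixr "\<triangleleft>" 60) where "x \<triangleleft> c \<equiv> x <#\<^bsub>G\<^esub> c"
abbreviation reduce where "reduce w \<equiv> foldr cons_red w []"

sublocale grp: group G by (rule group_free_group)

lemma fg_mult_eq: "x \<cdot> y = foldr cons_red x y"
  by (simp add: free_group_def)

lemma fg_one_eq: "\<one>\<^bsub>G\<^esub> = []"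
  by (simp add: free_group_def)

lemma set_subset_letters: "x \<in> carrier G \<Longrightarrow> set x \<subseteq> letters n"
  by (simp add: free_group_def)

lemma singleton_in_carrier: "a \<in> letters n \<Longrightarrow> [a] \<in> carrier G"
  by (simp add: free_group_def)

lemma reduce_in_carrier: "set w \<subseteq> letters n \<Longrightarrow> reduce w \<in> carrier G"
  using set_foldr_cons_red[of w "[]"] reduced_foldr_cons_red[of "[]" w] by (auto simp: free_group_def)

lemma reduce_eq: "x \<in> carrier G \<Longrightarrow> reduce x = x"
  using grp.r_one by (simp add: fg_mult_eq fg_one_eq)

lemma reduce_snoc: "reduce (w @ [l]) = reduce w \<cdot> [l]"
  using foldr_cons_red_assoc[of "[l]" w "[]"] by (simp add: fg_mult_eq)

text \<open>The Schreier graph has a vertex for each right coset \<open>c\<close> and, for each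
  generator index \<open>i\<close>, an edge \<open>(c, i)\<close> from \<open>c\<close> to \<open>c \<triangleright> [(i, True)]\<close>.\<close>

fun edge_count :: "letter list set \<Rightarrow> letter list \<Rightarrow> letter list set \<times> nat \<Rightarrow> int" where
  "edge_count c [] = (\<lambda>e. 0)"
| "edge_count c (l # w) = (\<lambda>e. (if snd l then (if e = (c, fst l) then 1 else 0)
       else (if e = (c \<triangleright> [l], fst l) then -1 else 0))
       + edge_count (c \<triangleright> [l]) w e)"

lemma edge_count_cons_red:
  assumes c: "c \<subseteq> carrier G" and a: "a \<in> letters n" and x: "set x \<subseteq> letters n"
  shows "edge_count c (cons_red a x) = edge_count c (a # x)"
proof (cases x)
  case (Cons b x')
  show ?thesis
  proof (cases "canceling a b")
    case True
    obtain i s where as: "a = (i, s)" by force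
    with True have bs: "b = (i, \<not> s)" by (cases b) (auto simp: canceling_def)
    have "[a] \<cdot> [b] = \<one>\<^bsub>G\<^esub>"
      using True by (simp add: fg_mult_eq fg_one_eq)
    moreover have "[b] \<in> carrier G" using x Cons by (simp add: singleton_in_carrier)
    ultimately have "c \<triangleright> [a] \<triangleright> [b] = c"
      using grp.coset_mult_assoc[OF c singleton_in_carrier[OF a]] grp.coset_mult_one[OF c] by simp
    then show ?thesis using True Cons as bs by (cases s) (auto simp: fun_eq_iff)
  qed (use Cons in simp)
qed simp

lemma edge_count_reduce_append:
  assumes "c \<subseteq> carrier G" "set u \<subseteq> letters n" "set v \<subseteq> letters n"
  shows "edge_count c (foldr cons_red u v) = edge_count c (u @ v)"
  using assms
proof (induction u arbitrary: c)
  case (Cons a u)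
  have a: "a \<in> letters n" using Cons by auto
  have "set (foldr cons_red u v) \<subseteq> letters n" using set_foldr_cons_red[of u v] Cons by auto
  then have "edge_count c (foldr cons_red (a # u) v) = edge_count c (a # foldr cons_red u v)"
    using edge_count_cons_red[OF Cons(2) a] by simp
  also have "\<dots> = edge_count c (a # u @ v)"
    using Cons grp.r_coset_subset_G[OF Cons(2) singleton_in_carrier[OF a]] by (simp add: fun_eq_iff)
  finally show ?case by simp
qed simp

lemma edge_count_append:
  "edge_count c (u @ v) e = edge_count c u e + edge_count (fold (\<lambda>l c. c \<triangleright> [l]) u c) v e"
  by (induction u arbitrary: c) auto

lemma fold_r_coset_letters:
  assumes "c \<subseteq> carrier G" "set u \<subseteq> letters n"
  shows "fold (\<lambda>l c. c \<triangleright> [l]) u c = c \<triangleright> reduce u"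
  using assms
proof (induction u arbitrary: c)
  case Nil
  then show ?case using grp.coset_mult_one by (simp add: fg_one_eq)
next
  case (Cons a u)
  have a: "[a] \<in> carrier G" using Cons by (simp add: singleton_in_carrier)
  have "fold (\<lambda>l c. c \<triangleright> [l]) (a # u) c = c \<triangleright> [a] \<triangleright> reduce u"
    using Cons grp.r_coset_subset_G[OF Cons(2) a] by simp
  also have "\<dots> = c \<triangleright> ([a] \<cdot> reduce u)"
    using Cons by (simp add: grp.coset_mult_assoc a reduce_in_carrier)
  finally show ?case by (simp add: fg_mult_eq)
qed

lemma edge_count_mult:
  assumes "c \<subseteq> carrier G" "x \<in> carrier G" "y \<in> carrier G"
  shows "edge_count c (x \<cdot> y) e = edge_count c x e + edge_count (c \<triangleright> x) y e"
proof -
  have "edge_count c (x \<cdot> y) = edge_count c (x @ y)"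
    using edge_count_reduce_append assms set_subset_letters by (simp add: fg_mult_eq)
  then show ?thesis
    using edge_count_append[of c x y e] fold_r_coset_letters[OF assms(1) set_subset_letters[OF assms(2)]]
      reduce_eq[OF assms(2)] by simp
qed

lemma edge_count_inv:
  assumes "c \<subseteq> carrier G" "x \<in> carrier G"
  shows "edge_count (c \<triangleright> x) (inv\<^bsub>G\<^esub> x) e = - edge_count c x e"
  using edge_count_mult[OF assms grp.inv_closed[OF assms(2)], of e] assms(2)
  by (simp add: fg_one_eq)

lemma l_coset_cancel:
  assumes "h \<in> carrier G" "c \<subseteq> carrier G"
  shows "inv\<^bsub>G\<^esub> h \<triangleleft> h \<triangleleft> c = c"
  using grp.lcos_m_assoc[OF assms(2), of "inv\<^bsub>G\<^esub> h" h] grp.lcos_mult_one[OF assms(2)] assms(1)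
  by simp

lemma l_coset_inj:
  assumes "h \<in> carrier G" "c \<subseteq> carrier G" "d \<subseteq> carrier G"
  shows "h \<triangleleft> c = h \<triangleleft> d \<longleftrightarrow> c = d"
  using l_coset_cancel[OF assms(1,2)] l_coset_cancel[OF assms(1,3)] by metis

text \<open>Left multiplication is the deck group action on the Schreier graph.\<close>

lemma edge_count_l_coset:
  assumes "h \<in> carrier G" "c \<subseteq> carrier G" "d \<subseteq> carrier G" "set w \<subseteq> letters n"
  shows "edge_count (h \<triangleleft> c) w (h \<triangleleft> d, i) = edge_count c w (d, i)"
  using assms(2,4)
proof (induction w arbitrary: c)
  case (Cons a w)
  have a: "[a] \<in> carrier G" using Cons by (simp add: singleton_in_carrier)
  have ca: "c \<triangleright> [a] \<subseteq> carrier G" using grp.r_coset_subset_G[OF Cons(2) a] .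
  have "(h \<triangleleft> c) \<triangleright> [a] = h \<triangleleft> (c \<triangleright> [a])"
    using grp.coset_assoc[OF assms(1) a Cons(2)] by simp
  then show ?case
    using Cons ca l_coset_inj[OF assms(1) assms(3)] l_coset_inj[OF assms(1) assms(3) Cons(2)] by auto
qed simp

end

lemma (in group) characteristic_imp_normal:
  assumes "characteristic G K"
  shows "K \<lhd> G"
proof -
  have sub: "subgroup K G" using assms by (simp add: characteristic_def)
  have "x \<otimes> h \<otimes> inv x \<in> K" if x: "x \<in> carrier G" and h: "h \<in> K" for x h
  proof -
    define \<phi> where "\<phi> = (\<lambda>y\<in>carrier G. x \<otimes> y \<otimes> inv x)"
    have cancel: "inv x \<otimes> (x \<otimes> z) = z" if "z \<in> carrier G" for z
      using that x by (simp add: m_assoc[symmetric])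
    have "\<phi> \<in> hom G G"
      unfolding hom_def \<phi>_def using x by (auto simp: m_assoc cancel)
    with conjugation_is_bij[OF x] have "\<phi> \<in> iso G G"
      by (simp add: iso_def \<phi>_def)
    then have "\<phi> ` K = K" using assms by (simp add: characteristic_def)
    then show ?thesis using h subgroup.mem_carrier[OF sub h] by (force simp: \<phi>_def)
  qed
  then show ?thesis using normal_inv_iff sub by blast
qed

lemma (in group) r_coset_eq_iff:
  assumes "subgroup H G" "a \<in> carrier G" "b \<in> carrier G"
  shows "H #> a = H #> b \<longleftrightarrow> a \<otimes> inv b \<in> H"
  using assms repr_independence[of a H b] repr_independenceD[of H a b]
    subgroup.rcos_module[OF assms(1) is_group assms(3,2)] by blast

locale schreier_graph = free_group_rank +
  fixes K :: "letter list set"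
  assumes K_normal: "K \<lhd> free_group n"
begin

sublocale nrm: normal K G by (rule K_normal)

abbreviation vertices where "vertices \<equiv> rcosets\<^bsub>G\<^esub> K"

lemma subgroup_K: "subgroup K G"
  using K_normal by (rule normal_imp_subgroup)

lemma K_subset_carrier: "K \<subseteq> carrier G"
  using subgroup_K subgroup.subset by blast

lemma r_coset_K: "k \<in> K \<Longrightarrow> K \<triangleright> k = K"
  using subgroup.rcos_const[OF subgroup_K grp.is_group] by blast

lemma edge_count_loop_mult:
  assumes "x \<in> K" "y \<in> K"
  shows "edge_count K (x \<cdot> y) e = edge_count K x e + edge_count K y e"
  using edge_count_mult[OF K_subset_carrier, of x y e] assms K_subset_carrier r_coset_K by auto

lemma edge_count_loop_inv:
  assumes "x \<in> K"
  shows "edge_count K (inv\<^bsub>G\<^esub> x) e = - edge_count K x e"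
  using edge_count_inv[OF K_subset_carrier, of x e] assms K_subset_carrier r_coset_K by auto

lemma edge_count_commutator:
  assumes "a \<in> K" "b \<in> K"
  shows "edge_count K (a \<cdot> b \<cdot> inv\<^bsub>G\<^esub> a \<cdot> inv\<^bsub>G\<^esub> b) e = 0"
  using assms subgroup.m_closed[OF subgroup_K] subgroup.m_inv_closed[OF subgroup_K]
  by (simp add: edge_count_loop_mult edge_count_loop_inv)

lemma edge_count_derived:
  assumes "d \<in> derived G K"
  shows "edge_count K d e = 0"
proof -
  have derived_subset: "generate G (derived_set G K) \<subseteq> K"
    using grp.derived_incl[OF subset_refl subgroup_K] by (simp add: derived_def)
  have commutators: "derived_set G K \<subseteq> K"
    using grp.derived_set_incl[OF subset_refl subgroup_K] .
  from assms show ?thesis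
    unfolding derived_def
  proof (induction rule: generate.induct)
    case one
    then show ?case by (simp add: fg_one_eq)
  next
    case (incl h)
    then show ?case using edge_count_commutator by blast
  next
    case (inv h)
    then have "h \<in> K" "edge_count K h e = 0"
      using commutators edge_count_commutator by blast+
    then show ?case by (simp add: edge_count_loop_inv)
  next
    case (eng h1 h2)
    then have "h1 \<in> K" "h2 \<in> K" using derived_subset by blast+
    with eng.IH show ?case by (simp add: edge_count_loop_mult)
  qed
qed

lemma edge_count_derived_r_coset:
  assumes "k \<in> K" "y \<in> derived G K \<triangleright> k"
  shows "y \<in> K \<and> edge_count K y = edge_count K k"
proof -
  obtain d where d: "d \<in> derived G K" "y = d \<cdot> k"
    using assms(2) by (auto simp: r_coset_def)
  have "d \<in> K" using d(1) grp.derived_incl[OF subset_refl subgroup_K] by blast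
  then show ?thesis
    using d assms(1) subgroup.m_closed[OF subgroup_K]
    by (auto simp: fun_eq_iff edge_count_loop_mult edge_count_derived)
qed

lemma edge_count_eq_if_fixes_abelianization:
  assumes "\<forall>C \<in> carrier (abelianization G K). \<psi> ` C = C" and k: "k \<in> K"
  shows "\<psi> k \<in> K \<and> edge_count K (\<psi> k) = edge_count K k"
proof -
  have "derived G K \<triangleright> k \<in> carrier (abelianization G K)"
    using k by (auto simp: abelianization_def FactGroup_def RCOSETS_def)
  with assms(1) have "\<psi> ` (derived G K \<triangleright> k) = derived G K \<triangleright> k" by blast
  moreover have "k \<in> derived G K \<triangleright> k"
    using k K_subset_carrier grp.rcos_self grp.derived_is_subgroup by blast
  ultimately show ?thesis using edge_count_derived_r_coset[OF k] by blast
qed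

lemma edge_count_conj:
  assumes x: "x \<in> carrier G" and k: "k \<in> K" and d: "d \<subseteq> carrier G"
  shows "edge_count K (x \<cdot> k \<cdot> inv\<^bsub>G\<^esub> x) (x \<triangleleft> d, i) = edge_count K k (d, i)"
proof -
  have kc: "k \<in> carrier G" using k K_subset_carrier by blast
  have Kx: "K \<triangleright> x = x \<triangleleft> K" using nrm.coset_eq x by blast
  have Kxk: "K \<triangleright> (x \<cdot> k) = K \<triangleright> x"
    using grp.coset_mult_assoc[OF K_subset_carrier x kc] grp.coset_assoc[OF x kc K_subset_carrier]
      r_coset_K[OF k] Kx by simp
  have "edge_count K (x \<cdot> k \<cdot> inv\<^bsub>G\<^esub> x) e
      = edge_count K x e + edge_count (K \<triangleright> x) k e + edge_count (K \<triangleright> x) (inv\<^bsub>G\<^esub> x) e" for e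
    using edge_count_mult[OF K_subset_carrier _ grp.inv_closed[OF x], of "x \<cdot> k"]
      edge_count_mult[OF K_subset_carrier x kc] x kc Kxk by simp
  then have "edge_count K (x \<cdot> k \<cdot> inv\<^bsub>G\<^esub> x) e = edge_count (x \<triangleleft> K) k e" for e
    using edge_count_inv[OF K_subset_carrier x] Kx by simp
  then show ?thesis
    using edge_count_l_coset[OF x K_subset_carrier d set_subset_letters[OF kc]] by simp
qed

end

context schreier_graph
begin

definition coset_dist :: "letter list set \<Rightarrow> nat" where
  "coset_dist c = (LEAST m. \<exists>w. set w \<subseteq> letters n \<and> length w = m \<and> K \<triangleright> reduce w = c)"

definition letter_edge :: "letter list set \<Rightarrow> letter \<Rightarrow> letter list set \<times> nat" where
  "letter_edge c l = (if snd l then (c, fst l) else (c \<triangleright> [l], fst l))"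

text \<open>The last edge of a shortest path from \<open>K\<close> to \<open>c\<close>; these edges form a
  spanning tree rooted at \<open>K\<close>.\<close>

definition parent_edge :: "letter list set \<Rightarrow> letter list set \<times> nat" where
  "parent_edge c = (SOME e. \<exists>c' l. l \<in> letters n \<and> c' \<in> vertices \<and> coset_dist c' < coset_dist c
     \<and> c' \<triangleright> [l] = c \<and> e = letter_edge c' l)"

definition tree_edges :: "(letter list set \<times> nat) set" where
  "tree_edges = parent_edge ` (vertices - {K})"

lemma vertices_subset_carrier: "c \<in> vertices \<Longrightarrow> c \<subseteq> carrier G"
  using subgroup.rcosets_carrier[OF subgroup_K grp.is_group] by blast

lemma K_in_vertices: "K \<in> vertices"
  using subgroup.subgroup_in_rcosets[OF subgroup_K grp.is_group] .

lemma r_coset_in_vertices: "c \<in> vertices \<Longrightarrow> x \<in> carrier G \<Longrightarrow> c \<triangleright> x \<in> vertices"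
  by (auto simp: RCOSETS_def grp.coset_mult_assoc[OF K_subset_carrier])

lemma edge_count_singleton: "edge_count c [l] e = (if e = letter_edge c l then (if snd l then 1 else -1) else 0)"
  by (simp add: letter_edge_def)

lemma coset_dist_witness:
  assumes "c \<in> vertices"
  shows "\<exists>w. set w \<subseteq> letters n \<and> length w = coset_dist c \<and> K \<triangleright> reduce w = c"
proof -
  obtain q where q: "q \<in> carrier G" "c = K \<triangleright> q" using assms unfolding RCOSETS_def by blast
  then have "set q \<subseteq> letters n \<and> length q = length q \<and> K \<triangleright> reduce q = c"
    using set_subset_letters reduce_eq by simp
  then have "\<exists>m w. set w \<subseteq> letters n \<and> length w = m \<and> K \<triangleright> reduce w = c" by blast
  from LeastI_ex[OF this] show ?thesis unfolding coset_dist_def .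
qed

lemma coset_dist_le: "set w \<subseteq> letters n \<Longrightarrow> coset_dist (K \<triangleright> reduce w) \<le> length w"
  unfolding coset_dist_def by (rule Least_le) blast

lemma parent_edge_spec:
  assumes "c \<in> vertices" "c \<noteq> K"
  shows "\<exists>c' l. l \<in> letters n \<and> c' \<in> vertices \<and> coset_dist c' < coset_dist c
    \<and> c' \<triangleright> [l] = c \<and> parent_edge c = letter_edge c' l"
proof -
  obtain w where w: "set w \<subseteq> letters n" "length w = coset_dist c" "K \<triangleright> reduce w = c"
    using coset_dist_witness[OF assms(1)] by blast
  have "w \<noteq> []"
  proof
    assume "w = []"
    then have "c = K \<triangleright> \<one>\<^bsub>G\<^esub>" using w(3) by (simp add: fg_one_eq)
    then show False using assms(2) grp.coset_mult_one[OF K_subset_carrier] by simp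
  qed
  then obtain w' l where wl: "w = w' @ [l]" by (cases w rule: rev_exhaust) auto
  have w': "set w' \<subseteq> letters n" and l: "l \<in> letters n" using w(1) wl by auto
  define c' where "c' = K \<triangleright> reduce w'"
  have "c' \<in> vertices"
    unfolding c'_def using grp.rcosetsI[OF K_subset_carrier reduce_in_carrier[OF w']] .
  moreover have "coset_dist c' < coset_dist c"
    using coset_dist_le[OF w'] w(2) wl unfolding c'_def by simp
  moreover have "c' \<triangleright> [l] = c"
    using grp.coset_mult_assoc[OF K_subset_carrier reduce_in_carrier[OF w'] singleton_in_carrier[OF l]]
      w(3) wl reduce_snoc unfolding c'_def by simp
  ultimately have "\<exists>e c' l. l \<in> letters n \<and> c' \<in> vertices \<and> coset_dist c' < coset_dist c
    \<and> c' \<triangleright> [l] = c \<and> e = letter_edge c' l"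
    using l by blast
  from someI_ex[OF this] show ?thesis unfolding parent_edge_def by blast
qed

lemma tree_path_exists:
  "c \<in> vertices \<Longrightarrow> \<exists>p \<in> carrier G. K \<triangleright> p = c \<and> (\<forall>e. e \<notin> tree_edges \<longrightarrow> edge_count K p e = 0)"
proof (induction "coset_dist c" arbitrary: c rule: less_induct)
  case less
  show ?case
  proof (cases "c = K")
    case True
    then show ?thesis
      using grp.one_closed grp.coset_mult_one[OF K_subset_carrier]
      by (intro bexI[of _ "\<one>\<^bsub>G\<^esub>"]) (auto simp: fg_one_eq)
  next
    case False
    obtain c' l where cl: "l \<in> letters n" "c' \<in> vertices" "coset_dist c' < coset_dist c"
      "c' \<triangleright> [l] = c" "parent_edge c = letter_edge c' l"
      using parent_edge_spec[OF less.prems False] by blast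
    obtain p where p: "p \<in> carrier G" "K \<triangleright> p = c'" "\<forall>e. e \<notin> tree_edges \<longrightarrow> edge_count K p e = 0"
      using less.hyps[OF cl(3) cl(2)] by blast
    have tree: "parent_edge c \<in> tree_edges" unfolding tree_edges_def using less.prems False by blast
    have l: "[l] \<in> carrier G" using singleton_in_carrier[OF cl(1)] .
    show ?thesis
    proof (intro bexI conjI allI impI)
      show "p \<cdot> [l] \<in> carrier G" using p(1) l by simp
      show "K \<triangleright> (p \<cdot> [l]) = c"
        using grp.coset_mult_assoc[OF K_subset_carrier p(1) l] p(2) cl(4) by simp
      fix e assume e: "e \<notin> tree_edges"
      then have "e \<noteq> letter_edge c' l" using tree cl(5) by auto
      have "edge_count K (p \<cdot> [l]) e = edge_count K p e + edge_count c' [l] e"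
        using edge_count_mult[OF K_subset_carrier p(1) l, of e] p(2) by (simp only:)
      also have "\<dots> = 0"
        unfolding edge_count_singleton using \<open>e \<noteq> letter_edge c' l\<close> p(3)[rule_format, OF e] by simp
      finally show "edge_count K (p \<cdot> [l]) e = 0" .
    qed
  qed
qed

text \<open>The loop runs through the tree to \<open>c\<close>, across \<open>(c, i)\<close>, and back through the tree.\<close>

lemma nontree_edge_loop:
  assumes c: "c \<in> vertices" and i: "i < n"
  obtains k where "k \<in> K" "\<And>e. e \<notin> tree_edges \<Longrightarrow> edge_count K k e = (if e = (c, i) then 1 else 0)"
proof -
  define x where "x = [(i, True)]"
  have x: "x \<in> carrier G" unfolding x_def using i by (intro singleton_in_carrier) (simp add: letters_def)
  obtain p where p: "p \<in> carrier G" "K \<triangleright> p = c" "\<forall>e. e \<notin> tree_edges \<longrightarrow> edge_count K p e = 0"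
    using tree_path_exists[OF c] by blast
  obtain q where q: "q \<in> carrier G" "K \<triangleright> q = c \<triangleright> x"
    "\<forall>e. e \<notin> tree_edges \<longrightarrow> edge_count K q e = 0"
    using tree_path_exists[OF r_coset_in_vertices[OF c x]] by blast
  have px: "p \<cdot> x \<in> carrier G" and Kpx: "K \<triangleright> (p \<cdot> x) = c \<triangleright> x"
    using p x grp.coset_mult_assoc[OF K_subset_carrier p(1) x] by auto
  have "p \<cdot> x \<cdot> inv\<^bsub>G\<^esub> q \<in> K"
    using grp.r_coset_eq_iff[OF subgroup_K px q(1)] Kpx q(2) by simp
  moreover have "edge_count K (p \<cdot> x \<cdot> inv\<^bsub>G\<^esub> q) e
      = edge_count K p e + edge_count c x e - edge_count K q e" for e
    using edge_count_mult[OF K_subset_carrier px grp.inv_closed[OF q(1)]]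
      edge_count_mult[OF K_subset_carrier p(1) x] edge_count_inv[OF K_subset_carrier q(1)]
      p(2) q(2) Kpx by simp
  ultimately show ?thesis
    using p(3) q(3) by (intro that[of "p \<cdot> x \<cdot> inv\<^bsub>G\<^esub> q"]) (auto simp: x_def)
qed

lemma l_coset_ne_self:
  assumes u: "u \<in> carrier G" "u \<notin> K" and c: "c \<in> vertices"
  shows "u \<triangleleft> c \<noteq> c"
proof -
  obtain q where q: "q \<in> carrier G" "c = K \<triangleright> q" using c unfolding RCOSETS_def by blast
  have "u \<triangleleft> c = K \<triangleright> (u \<cdot> q)"
    using grp.coset_assoc[OF u(1) q(1) K_subset_carrier] nrm.coset_eq u(1)
      grp.coset_mult_assoc[OF K_subset_carrier u(1) q(1)] q(2) by simp
  moreover have "K \<triangleright> (u \<cdot> q) \<noteq> K \<triangleright> q"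
    using grp.r_coset_eq_iff[OF subgroup_K _ q(1), of "u \<cdot> q"] u q(1) by (simp add: grp.m_assoc)
  ultimately show ?thesis using q(2) by simp
qed

end

lemma (in schreier_graph) translation_invariant_loop_counts_imp_mem:
  assumes fin: "finite vertices" and n2: "2 \<le> n" and u: "u \<in> carrier G"
    and invariant: "\<And>k c i. k \<in> K \<Longrightarrow> c \<in> vertices \<Longrightarrow>
      edge_count K k (u \<triangleleft> c, i) = edge_count K k (c, i)"
  shows "u \<in> K"
proof (rule ccontr)
  assume uK: "u \<notin> K"
  define nontree where "nontree = (vertices \<times> {..<n}) - tree_edges"
  define \<sigma> where "\<sigma> = (\<lambda>(c :: letter list set, i :: nat). (u \<triangleleft> c, i))"
  have into_tree: "\<sigma> ` nontree \<subseteq> tree_edges"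
  proof (rule image_subsetI)
    fix e assume "e \<in> nontree"
    then obtain c i where e: "e = (c, i)" "c \<in> vertices" "i < n" "(c, i) \<notin> tree_edges"
      unfolding nontree_def by auto
    obtain k where k: "k \<in> K" "\<And>e. e \<notin> tree_edges \<Longrightarrow> edge_count K k e = (if e = (c, i) then 1 else 0)"
      using nontree_edge_loop[OF e(2,3)] by blast
    have "edge_count K k (u \<triangleleft> c, i) = 1"
      using invariant[OF k(1) e(2)] k(2)[OF e(4)] by simp
    moreover have "u \<triangleleft> c \<noteq> c" using l_coset_ne_self[OF u uK e(2)] .
    ultimately have "(u \<triangleleft> c, i) \<in> tree_edges"
      using k(2)[of "(u \<triangleleft> c, i)"] by (cases "(u \<triangleleft> c, i) \<in> tree_edges") simp_all
    then show "\<sigma> e \<in> tree_edges" by (simp add: \<sigma>_def e(1))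
  qed
  have inj: "inj_on \<sigma> nontree"
  proof (rule inj_onI)
    fix a b assume "a \<in> nontree" "b \<in> nontree" "\<sigma> a = \<sigma> b"
    moreover obtain c i c' i' where "a = (c, i)" "b = (c', i')" by force
    ultimately show "a = b"
      using l_coset_inj[OF u] vertices_subset_carrier unfolding nontree_def \<sigma>_def by auto
  qed
  have finite_tree: "finite tree_edges" unfolding tree_edges_def using fin by simp
  have "card nontree \<le> card tree_edges" using card_inj_on_le[OF inj into_tree finite_tree] .
  moreover have "card tree_edges \<le> card vertices - 1"
    unfolding tree_edges_def
    using card_image_le[of "vertices - {K}" parent_edge] fin card_Diff_singleton[OF K_in_vertices] by simp
  moreover have "card vertices * n - card tree_edges \<le> card nontree"
    unfolding nontree_def using diff_card_le_card_Diff[OF finite_tree, of "vertices \<times> {..<n}"]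
    by (simp add: card_cartesian_product)
  moreover have "card vertices > 0" using card_gt_0_iff fin K_in_vertices by blast
  moreover have "card vertices * 2 \<le> card vertices * n" using n2 by simp
  ultimately show False by linarith
qed

text \<open>Conjugating by \<open>g\<close> and by \<open>\<psi> g\<close> turns the \<open>\<psi>\<close>-invariance of edge counts into
  invariance under the deck transformation \<open>\<psi>(g) g\<inverse>\<close>.\<close>

lemma (in schreier_graph) edge_count_l_coset_invariant:
  assumes \<psi>: "\<psi> \<in> hom G G" and g: "g \<in> carrier G"
    and preserves: "\<And>k. k \<in> K \<Longrightarrow> \<psi> k \<in> K \<and> edge_count K (\<psi> k) = edge_count K k"
    and k: "k \<in> K" and c: "c \<in> vertices"
  shows "edge_count K k ((\<psi> g \<cdot> inv\<^bsub>G\<^esub> g) \<triangleleft> c, i) = edge_count K k (c, i)"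
proof -
  interpret \<psi>: group_hom G G \<psi> using \<psi> by unfold_locales
  define k0 where "k0 = inv\<^bsub>G\<^esub> g \<cdot> k \<cdot> g"
  define d where "d = inv\<^bsub>G\<^esub> g \<triangleleft> c"
  have kc: "k \<in> carrier G" using k K_subset_carrier by blast
  have k0: "k0 \<in> K" "k0 \<in> carrier G"
    unfolding k0_def using nrm.inv_op_closed1[OF g k] K_subset_carrier by auto
  have k_eq: "k = g \<cdot> k0 \<cdot> inv\<^bsub>G\<^esub> g"
    unfolding k0_def using g kc by (simp add: grp.m_assoc[symmetric]) (simp add: grp.m_assoc)
  have \<psi>k_eq: "\<psi> k = \<psi> g \<cdot> \<psi> k0 \<cdot> inv\<^bsub>G\<^esub> (\<psi> g)"
    unfolding k_eq using g k0(2) by simp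
  have d: "d \<subseteq> carrier G" unfolding d_def using grp.l_coset_subset_G[OF vertices_subset_carrier[OF c]] g by simp
  have c_eq: "c = g \<triangleleft> d" "(\<psi> g \<cdot> inv\<^bsub>G\<^esub> g) \<triangleleft> c = \<psi> g \<triangleleft> d"
    unfolding d_def using l_coset_cancel[of "inv\<^bsub>G\<^esub> g" c] vertices_subset_carrier[OF c] g
      grp.lcos_m_assoc[OF vertices_subset_carrier[OF c] _ grp.inv_closed[OF g], of "\<psi> g"] by auto
  have "edge_count K k (\<psi> g \<triangleleft> d, i) = edge_count K (\<psi> k) (\<psi> g \<triangleleft> d, i)"
    using preserves[OF k] by simp
  also have "\<dots> = edge_count K (\<psi> k0) (d, i)"
    unfolding \<psi>k_eq using edge_count_conj[OF _ _ d] preserves[OF k0(1)] g by simp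
  also have "\<dots> = edge_count K k (g \<triangleleft> d, i)"
    using preserves[OF k0(1)] edge_count_conj[OF g k0(1) d] k_eq by simp
  finally show ?thesis using c_eq by simp
qed

theorem proposition1p1:
  fixes n :: nat and \<psi> :: "letter list \<Rightarrow> letter list" and K :: "letter list set"
  assumes "n \<ge> 2"
    and "\<psi> \<in> iso (free_group n) (free_group n)"
    and "characteristic (free_group n) K"
    and "finite (carrier (free_group n Mod K))"
    and "\<exists>C \<in> carrier (free_group n Mod K). induced_on_cosets \<psi> C \<noteq> C"
  shows "\<exists>C \<in> carrier (abelianization (free_group n) K). induced_on_cosets \<psi> C \<noteq> C"
proof (rule ccontr)
  assume fixes_H1: "\<not> ?thesis"
  interpret schreier_graph n K
    using group.characteristic_imp_normal[OF group_free_group assms(3)]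
    by (simp add: schreier_graph_def)
  have \<psi>: "\<psi> \<in> hom G G" and \<psi>K: "\<psi> ` K = K"
    using assms(2,3) by (auto simp: iso_def characteristic_def)
  obtain g where g: "g \<in> carrier G" and moved: "\<psi> ` (K \<triangleright> g) \<noteq> K \<triangleright> g"
    using assms(5) by (auto simp: FactGroup_def RCOSETS_def induced_on_cosets_def)
  have "\<psi> ` (K \<triangleright> g) = K \<triangleright> \<psi> g"
    using coset_hom(2)[OF \<psi> K_subset_carrier g] \<psi>K by simp
  with moved have "\<psi> g \<cdot> inv\<^bsub>G\<^esub> g \<notin> K"
    using grp.r_coset_eq_iff[OF subgroup_K _ g] \<psi> g by (simp add: hom_in_carrier)
  moreover have "\<forall>C \<in> carrier (abelianization G K). \<psi> ` C = C"
    using fixes_H1 by (auto simp: induced_on_cosets_def)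
  ultimately show False
    using translation_invariant_loop_counts_imp_mem[OF _ assms(1)] edge_count_l_coset_invariant[OF \<psi> g]
      edge_count_eq_if_fixes_abelianization assms(4) \<psi> g by (simp add: FactGroup_def hom_in_carrier)
qed

end
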